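(* Let $D,\beta,\delta,\alpha\in\mathbb R$ with $(\beta,D)\neq(0,0)$, and let $\lambda\in\mathbb C$ with $\lambda\notin\sigma_{\mathrm{ess}}$, where $$\sigma_{\mathrm{ess}}=\Big\{\lambda\in\mathbb C:\ \lambda=(\delta\pm i\alpha)-s^2\big(\beta\pm i\tfrac D2\big)\ \text{for some } s\in\mathbb R\Big\}$$ (the two $\pm$ signs taken together). Then the matrix $$\mathbf A_\infty(\lambda)=\begin{bmatrix}\mathbf 0&\mathbf I\\ \mathbf B^{-1}(\lambda\mathbf I-\mathbf N_0)&\mathbf 0\end{bmatrix}\in\mathbb C^{4\times4},\qquad \mathbf B=\begin{bmatrix}\beta&-\frac D2\\ \frac D2&\beta\end{bmatrix},\quad \mathbf N_0=\begin{bmatrix}\delta&-\alpha\\ \alpha&\delta\end{bmatrix},$$ has two eigenvalues with positive real part and two eigenvalues with negative real part.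
   Context: Here $\mathbf I$ and $\mathbf 0$ denote the $2\times2$ identity and zero matrices. The set $\sigma_{\mathrm{ess}}$ is the essential spectrum of the operator $\mathbf B\partial_x^2+\mathbf N_0$ obtained as the asymptotic part of the linearization of the cubic-quintic complex Ginzburg–Landau equation about a stationary pulse. *)

theory Defs
  imports "Jordan_Normal_Form.Jordan_Normal_Form" "Jordan_Normal_Form.Gauss_Jordan_Elimination"
begin

definition Bmat :: "real \<Rightarrow> real \<Rightarrow> complex mat" where
  "Bmat \<beta> D = mat_of_rows_list 2
     [[complex_of_real \<beta>, - complex_of_real (D/2)],
      [complex_of_real (D/2), complex_of_real \<beta>]]"

definition N0mat :: "real \<Rightarrow> real \<Rightarrow> complex mat" where
  "N0mat \<delta> \<alpha> = mat_of_rows_list 2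
     [[complex_of_real \<delta>, - complex_of_real \<alpha>],
      [complex_of_real \<alpha>, complex_of_real \<delta>]]"

definition A_inf :: "real \<Rightarrow> real \<Rightarrow> real \<Rightarrow> real \<Rightarrow> complex \<Rightarrow> complex mat" where
  "A_inf D \<beta> \<delta> \<alpha> lam = four_block_mat
     (0\<^sub>m 2 2) (1\<^sub>m 2)
     (the (mat_inverse (Bmat \<beta> D)) * (lam \<cdot>\<^sub>m 1\<^sub>m 2 - N0mat \<delta> \<alpha>)) (0\<^sub>m 2 2)"

definition sigma_ess :: "real \<Rightarrow> real \<Rightarrow> real \<Rightarrow> real \<Rightarrow> complex set" where
  "sigma_ess D \<beta> \<delta> \<alpha> = {lam. \<exists>s::real.
      lam = Complex \<delta> \<alpha> - complex_of_real (s^2) * Complex \<beta> (D/2) \<or>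
      lam = Complex \<delta> (-\<alpha>) - complex_of_real (s^2) * Complex \<beta> (-D/2)}"

end

theory Submission
  imports Defs
begin

(* B, N_0, and hence M = B^-1 (lam I - N_0), are all of the form a I + b J with J^2 = -I, so they
   commute and act on the two eigenvectors of J through the numbers a + i b and a - i b. Hence M has
   eigenvalues w_+ = (lam - (delta + i alpha)) / (beta + i D/2) and
   w_- = (lam - (delta - i alpha)) / (beta - i D/2). The characteristic polynomial of [[0, I], [M, 0]]
   is det (x^2 I - M) = (x^2 - w_+) (x^2 - w_-), so the eigenvalues of A_inf are +- csqrt w_+ and
   +- csqrt w_-. The condition lam \<notin> sigma_ess says precisely that neither w_+ nor w_- is a
   nonpositive real, so both principal square roots have positive real part. *)

lemma mat_of_rows_list_2_carrier [simp]: "mat_of_rows_list 2 [[a, b], [c, d]] \<in> carrier_mat 2 2"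
  by (simp add: mat_of_rows_list_def numeral_2_eq_2)

lemma det_mat_of_rows_list_2:
  "det (mat_of_rows_list 2 [[a, b], [c, d]]) = (a * d - b * c :: 'a :: comm_ring_1)"
proof -
  have "mat_delete (mat_of_rows_list 2 [[a, b], [c, d]]) 0 j \<in> carrier_mat 1 1" for j
    by (simp add: mat_delete_def mat_of_rows_list_def)
  then show ?thesis
    by (subst laplace_expansion_row[of _ 2 0])
      (simp_all add: cofactor_def numeral_2_eq_2 lessThan_Suc det_single mat_delete_def mat_of_rows_list_def)
qed

lemma mat_inverse_mult_cancel_left:
  fixes A :: "'a :: field mat"
  assumes A: "A \<in> carrier_mat n n" and det: "det A \<noteq> 0" and M: "M \<in> carrier_mat n n"
  shows "the (mat_inverse A) * (A * M) = M"
proof -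
  have "A \<in> Units (ring_mat TYPE('a) n ())"
    by (rule det_non_zero_imp_unit[OF A det])
  then obtain B where "mat_inverse A = Some B"
    using mat_inverse(1)[OF A] by fastforce
  with mat_inverse(2)[OF A] have B: "B \<in> carrier_mat n n" "B * A = 1\<^sub>m n" and "the (mat_inverse A) = B"
    by auto
  then show ?thesis
    using A M by (simp add: assoc_mult_mat[symmetric, OF B(1) A M])
qed

lemma char_poly_four_block_zero_one:
  fixes M :: "'a :: idom mat"
  assumes M: "M \<in> carrier_mat n n"
  shows "char_poly (four_block_mat (0\<^sub>m n n) (1\<^sub>m n) M (0\<^sub>m n n)) = char_poly M \<circ>\<^sub>p [:0, 0, 1:]"
proof -
  let ?X = "[:0, 1:] \<cdot>\<^sub>m 1\<^sub>m n :: 'a poly mat"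
  let ?M = "map_mat (\<lambda>a. [:- a:]) M"
  have "char_poly_matrix (four_block_mat (0\<^sub>m n n) (1\<^sub>m n) M (0\<^sub>m n n))
      = four_block_mat ?X (- 1\<^sub>m n) ?M ?X"
    using M by (intro eq_matI) (auto simp: char_poly_matrix_def one_pCons)
  moreover have "det (four_block_mat ?X (- 1\<^sub>m n) ?M ?X) = det (?X * ?X - (- 1\<^sub>m n) * ?M)"
    using M by (intro det_four_block_mat) auto
  moreover have "?X * ?X - (- 1\<^sub>m n) * ?M = map_mat (\<lambda>p. p \<circ>\<^sub>p [:0, 0, 1:]) (char_poly_matrix M)"
    using M by (intro eq_matI) (auto simp: char_poly_matrix_def)
  ultimately show ?thesis
    unfolding char_poly_def by (simp add: comm_ring_hom.hom_det[OF pcompose_hom.comm_ring_hom_axioms])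
qed

(* a I + b J with J = [[0, -1], [1, 0]]: the real 2x2 matrix of multiplication by a + i b. *)
definition cplx_mat :: "'a :: comm_ring_1 \<Rightarrow> 'a \<Rightarrow> 'a mat" where
  "cplx_mat a b = mat_of_rows_list 2 [[a, - b], [b, a]]"

lemma cplx_mat_carrier [simp]: "cplx_mat a b \<in> carrier_mat 2 2"
  by (simp add: cplx_mat_def)

lemma cplx_mat_mult:
  "cplx_mat a b * cplx_mat c d = cplx_mat (a * c - b * d) (a * d + b * c)"
  by (rule eq_matI)
    (auto simp: cplx_mat_def mat_of_rows_list_def numeral_2_eq_2 less_Suc_eq scalar_prod_def algebra_simps)

lemma smult_one_minus_cplx_mat: "x \<cdot>\<^sub>m 1\<^sub>m 2 - cplx_mat a b = cplx_mat (x - a) (- b)"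
  by (rule eq_matI) (auto simp: cplx_mat_def mat_of_rows_list_def numeral_2_eq_2 less_Suc_eq)

lemma det_cplx_mat: "det (cplx_mat a b) = a * a + b * b"
  by (simp add: cplx_mat_def det_mat_of_rows_list_2)

lemma cplx_mat_eqI:
  fixes a b c d :: complex
  assumes "a + \<i> * b = c + \<i> * d" and "a - \<i> * b = c - \<i> * d"
  shows "cplx_mat a b = cplx_mat c d"
proof -
  have "(a + \<i> * b) + (a - \<i> * b) = (c + \<i> * d) + (c - \<i> * d)"
    using assms by simp
  then have "a = c" by simp
  with assms(1) show ?thesis by simp
qed

lemma char_poly_cplx_mat:
  fixes a b :: complex
  shows "char_poly (cplx_mat a b) = [:- (a + \<i> * b), 1:] * [:- (a - \<i> * b), 1:]"
proof -
  have "char_poly_matrix (cplx_mat a b) = mat_of_rows_list 2 [[[:- a, 1:], [:b:]], [[:- b:], [:- a, 1:]]]"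
    by (rule eq_matI) (auto simp: char_poly_matrix_def cplx_mat_def mat_of_rows_list_def numeral_2_eq_2 less_Suc_eq)
  then have "char_poly (cplx_mat a b) = [:a * a + b * b, - a - a, 1:]"
    by (simp add: char_poly_def det_mat_of_rows_list_2)
  also have "\<dots> = [:(a + \<i> * b) * (a - \<i> * b), - (a + \<i> * b) - (a - \<i> * b), 1:]"
    by (simp add: algebra_simps)
  also have "\<dots> = [:- (a + \<i> * b), 1:] * [:- (a - \<i> * b), 1:]"
    by (simp add: algebra_simps)
  finally show ?thesis .
qed

lemma pcompose_linear_X2: "[:a :: 'a :: comm_semiring_1, 1:] \<circ>\<^sub>p [:0, 0, 1:] = [:a, 0, 1:]"
  by simp

lemma X2_minus_eq_csqrt_factors: "[:- z, 0, 1:] = [:- csqrt z, 1:] * [:csqrt z, 1:]"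
  by (simp add: power2_eq_square[symmetric])

lemma Re_csqrt_pos:
  assumes "\<forall>s::real. z \<noteq> - complex_of_real (s\<^sup>2)"
  shows "0 < Re (csqrt z)"
proof (rule ccontr)
  assume "\<not> 0 < Re (csqrt z)"
  then have "csqrt z = \<i> * complex_of_real (Im (csqrt z))"
    using Re_csqrt[of z] by (simp add: complex_eq_iff)
  then have "z = - complex_of_real ((Im (csqrt z))\<^sup>2)"
    by (metis power2_csqrt power_mult_distrib power2_i of_real_power mult_minus1)
  with assms show False by blast
qed

lemma complex_mult_expand:
  fixes a b c d :: complex
  shows "(a + \<i> * b) * (c + \<i> * d) = (a * c - b * d) + \<i> * (a * d + b * c)"
    and "(a - \<i> * b) * (c - \<i> * d) = (a * c - b * d) - \<i> * (a * d + b * c)"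
  by (simp_all add: algebra_simps)

lemma Complex_cnj_eq: "Complex a b = of_real a + \<i> * of_real b" "cnj (Complex a b) = of_real a - \<i> * of_real b"
  by (simp_all add: Complex_eq)

lemma Bmat_eq_cplx_mat: "Bmat \<beta> D = cplx_mat (complex_of_real \<beta>) (complex_of_real (D/2))"
  by (simp add: Bmat_def cplx_mat_def)

lemma N0mat_eq_cplx_mat: "N0mat \<delta> \<alpha> = cplx_mat (complex_of_real \<delta>) (complex_of_real \<alpha>)"
  by (simp add: N0mat_def cplx_mat_def)

(* eig1 and eig2 are the identity B M = lam I - N_0 read off at the eigenvalues a + i b and a - i b. *)
lemma A_inf_eq_four_block_cplx_mat:
  assumes z: "Complex \<beta> (D/2) \<noteq> 0"
    and eig1: "Complex \<beta> (D/2) * (p + \<i> * q) = lam - Complex \<delta> \<alpha>"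
    and eig2: "cnj (Complex \<beta> (D/2)) * (p - \<i> * q) = lam - cnj (Complex \<delta> \<alpha>)"
  shows "A_inf D \<beta> \<delta> \<alpha> lam = four_block_mat (0\<^sub>m 2 2) (1\<^sub>m 2) (cplx_mat p q) (0\<^sub>m 2 2)"
proof -
  have "Bmat \<beta> D * cplx_mat p q = lam \<cdot>\<^sub>m 1\<^sub>m 2 - N0mat \<delta> \<alpha>"
    unfolding Bmat_eq_cplx_mat N0mat_eq_cplx_mat cplx_mat_mult smult_one_minus_cplx_mat
  proof (rule cplx_mat_eqI)
    show "of_real \<beta> * p - of_real (D/2) * q + \<i> * (of_real \<beta> * q + of_real (D/2) * p)
        = lam - of_real \<delta> + \<i> * - of_real \<alpha>"
      using eig1 unfolding Complex_cnj_eq complex_mult_expand(1) by simp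
    show "of_real \<beta> * p - of_real (D/2) * q - \<i> * (of_real \<beta> * q + of_real (D/2) * p)
        = lam - of_real \<delta> - \<i> * - of_real \<alpha>"
      using eig2 unfolding Complex_cnj_eq(2) complex_mult_expand(2) by simp
  qed
  moreover have "det (Bmat \<beta> D) \<noteq> 0"
  proof -
    have "\<beta> * \<beta> + D/2 * (D/2) \<noteq> 0"
      using z sum_squares_eq_zero_iff[of \<beta> "D/2"] by (auto simp: complex_eq_iff)
    moreover have "det (Bmat \<beta> D) = of_real (\<beta> * \<beta> + D/2 * (D/2))"
      by (simp only: Bmat_eq_cplx_mat det_cplx_mat of_real_mult of_real_add)
    ultimately show ?thesis
      by (simp only: of_real_eq_0_iff) simp
  qed
  ultimately have "the (mat_inverse (Bmat \<beta> D)) * (lam \<cdot>\<^sub>m 1\<^sub>m 2 - N0mat \<delta> \<alpha>) = cplx_mat p q"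
    using mat_inverse_mult_cancel_left[of "Bmat \<beta> D" 2 "cplx_mat p q"] by (simp add: Bmat_eq_cplx_mat)
  then show ?thesis
    unfolding A_inf_def by simp
qed

lemma notin_sigma_ess_quotients:
  assumes lam: "lam \<notin> sigma_ess D \<beta> \<delta> \<alpha>" and z: "Complex \<beta> (D/2) \<noteq> 0"
  shows "(lam - Complex \<delta> \<alpha>) / Complex \<beta> (D/2) \<noteq> - of_real (s\<^sup>2)"
    and "(lam - cnj (Complex \<delta> \<alpha>)) / cnj (Complex \<beta> (D/2)) \<noteq> - of_real (s\<^sup>2)"
proof -
  have "lam \<noteq> Complex \<delta> \<alpha> - of_real (s\<^sup>2) * Complex \<beta> (D/2)"
    and "lam \<noteq> Complex \<delta> (- \<alpha>) - of_real (s\<^sup>2) * Complex \<beta> (- D/2)"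
    using lam unfolding sigma_ess_def by blast+
  moreover have "cnj (Complex \<beta> (D/2)) \<noteq> 0"
    using z by simp
  ultimately show "(lam - Complex \<delta> \<alpha>) / Complex \<beta> (D/2) \<noteq> - of_real (s\<^sup>2)"
    and "(lam - cnj (Complex \<delta> \<alpha>)) / cnj (Complex \<beta> (D/2)) \<noteq> - of_real (s\<^sup>2)"
    using z by (auto simp: field_simps complex_cnj)
qed

theorem proposition4p3:
  fixes D \<beta> \<delta> \<alpha> :: real and lam :: complex
  assumes "(\<beta>, D) \<noteq> (0, 0)"
    and "lam \<notin> sigma_ess D \<beta> \<delta> \<alpha>"
  shows "\<exists>es :: complex list. length es = 4 \<and>
           char_poly (A_inf D \<beta> \<delta> \<alpha> lam) = (\<Prod>e\<leftarrow>es. [:- e, 1:]) \<and>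
           length (filter (\<lambda>e. Re e > 0) es) = 2 \<and>
           length (filter (\<lambda>e. Re e < 0) es) = 2"
proof -
  let ?z = "Complex \<beta> (D/2)"
  have z: "?z \<noteq> 0"
    using assms(1) by (simp add: complex_eq_iff)
  define w1 where "w1 = (lam - Complex \<delta> \<alpha>) / ?z"
  define w2 where "w2 = (lam - cnj (Complex \<delta> \<alpha>)) / cnj ?z"
  define p where "p = (w1 + w2) / 2"
  define q where "q = (w1 - w2) / (2 * \<i>)"
  have pq: "p + \<i> * q = w1" "p - \<i> * q = w2"
    by (simp_all add: p_def q_def field_simps)
  have "A_inf D \<beta> \<delta> \<alpha> lam = four_block_mat (0\<^sub>m 2 2) (1\<^sub>m 2) (cplx_mat p q) (0\<^sub>m 2 2)"
    using z by (intro A_inf_eq_four_block_cplx_mat) (simp_all add: pq w1_def w2_def)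
  then have "char_poly (A_inf D \<beta> \<delta> \<alpha> lam) = ([:- w1, 1:] * [:- w2, 1:]) \<circ>\<^sub>p [:0, 0, 1:]"
    by (simp only: char_poly_four_block_zero_one[OF cplx_mat_carrier] char_poly_cplx_mat pq)
  also have "\<dots> = [:- w1, 0, 1:] * [:- w2, 0, 1:]"
    by (simp only: pcompose_mult pcompose_linear_X2)
  also have "\<dots> = (\<Prod>e\<leftarrow>[csqrt w1, - csqrt w1, csqrt w2, - csqrt w2]. [:- e, 1:])"
    by (simp only: X2_minus_eq_csqrt_factors prod_list.Cons prod_list.Nil list.map minus_minus mult_1_right mult.assoc)
  finally have "char_poly (A_inf D \<beta> \<delta> \<alpha> lam) = \<dots>" .
  moreover have "0 < Re (csqrt w1)" "0 < Re (csqrt w2)"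
    unfolding w1_def w2_def using notin_sigma_ess_quotients[OF assms(2) z] by (blast intro: Re_csqrt_pos)+
  ultimately show ?thesis
    by (intro exI[of _ "[csqrt w1, - csqrt w1, csqrt w2, - csqrt w2]"]) auto
qed

end
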